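(* Let $m\ge0$ be an integer and write $s_n=s_n^{(1,m+2)}$. Then for all $n\ge0$, \[ s_n^2=s_n+2\sum_{k=0}^{n-m-2}\sum_{r=m+2}^{n-k}P_{r-1}^{\{-2,-1,m\}}s_k s_{n-k-r}^2 . \]
   Context: For positive integers $p<q$, $s_n^{(p,q)}$ is defined by $s_n^{(p,q)}=\delta_{0,n}+s_{n-p}^{(p,q)}+s_{n-q}^{(p,q)}$ for $n\ge0$ and $s_n^{(p,q)}=0$ for $n<0$. $\delta_{i,j}$ is $1$ if $i=j$ and $0$ otherwise. For a finite set $W$ of integers, $P_n^W$ is the number of permutations $\pi$ of $\{1,\dots,n\}$ with $\pi(i)-i\in W$ for all $i$ (the permanent of the $n\times n$ $(0,1)$ Toeplitz matrix whose $(i,j)$ entry is $1$ iff $j-i\in W$), with $P_0^W=1$. Empty sums are $0$. *)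

theory Defs
  imports Main "HOL-Combinatorics.Permutations"
begin

text \<open>s_n^{(p,q)}: delta_{0,n} + s_{n-p} + s_{n-q}, with s at negative indices = 0.
  Indices are natural numbers; a term with negative index is replaced by 0.
  The guard 0 < p (resp. 0 < q) only matters outside the intended range p, q positive.\<close>
function spq :: "nat \<Rightarrow> nat \<Rightarrow> nat \<Rightarrow> nat" where
  "spq p q n = (if n = 0 then 1 else 0)
     + (if 0 < p \<and> p \<le> n then spq p q (n - p) else 0)
     + (if 0 < q \<and> q \<le> n then spq p q (n - q) else 0)"
  by auto
termination by (relation "measure (\<lambda>(p,q,n). n)") auto

definition Pperm :: "int set \<Rightarrow> nat \<Rightarrow> nat" where
  "Pperm W n = card {\<pi>. \<pi> permutes {1..n} \<and> (\<forall>i\<in>{1..n}. int (\<pi> i) - int i \<in> W)}"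

end

theory Submission
  imports Defs
begin

(* Write s = spq 1 (m+2). For n > 0 we have s_n = s_(n-1) + s_(n-m-2), so squaring shows that
   (s_n^2 - s_n) / 2 obeys the recursion of s itself with the inhomogeneous term
   s_(n-1) s_(n-m-2); hence it is the convolution of s with these cross terms (this part works
   for every spq p q). The combinatorial input is the identity
   s_(n-1) s_(n-m-2) = sum_r P_(r-1) s_(n-r)^2. It is proved more generally for the products
   s_L s_(L-d), 1 <= d <= m+1, with P replaced by the permanents of the band matrix with offsets
   {-2, -1, m} from which one column has been deleted: expanding these permanents along the
   first row yields exactly the recursion that s_L s_(L-d) inherits from s. *)

lemma sum_lessThan_shift_if_le:
  fixes L k :: nat
  shows "(\<Sum>j<L. if k \<le> j then g (j - k) else 0) = (\<Sum>i<L - k. g i)"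
  by (induction L) (auto simp: Suc_diff_le)

declare spq.simps [simp del]

lemma spq_0: "spq p q 0 = 1"
  by (subst spq.simps) simp

lemma spq_pos:
  assumes "0 < n"
  shows "spq p q n = (if 0 < p \<and> p \<le> n then spq p q (n - p) else 0)
    + (if 0 < q \<and> q \<le> n then spq p q (n - q) else 0)"
  using assms by (subst spq.simps) simp

lemma spq_convolution_rec:
  fixes p q :: nat and c :: "nat \<Rightarrow> nat"
  defines "Y \<equiv> \<lambda>n. \<Sum>k\<le>n. spq p q k * c (n - k)"
  assumes "0 < p" and "0 < q"
  shows "Y n = c n + (if p \<le> n then Y (n - p) else 0) + (if q \<le> n then Y (n - q) else 0)"
proof -
  have shifted: "(\<Sum>k<Suc n. if r \<le> k then spq p q (k - r) * c (n - k) else 0) =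
      (if r \<le> n then Y (n - r) else 0)" for r
  proof -
    have "(\<Sum>k<Suc n. if r \<le> k then spq p q (k - r) * c (n - k) else 0) =
        (\<Sum>k<Suc n. if r \<le> k then spq p q (k - r) * c (n - r - (k - r)) else 0)"
      by (intro sum.cong) auto
    also have "\<dots> = (\<Sum>i<Suc n - r. spq p q i * c (n - r - i))"
      by (rule sum_lessThan_shift_if_le)
    finally show ?thesis
      unfolding Y_def by (auto simp: Suc_diff_le lessThan_Suc_atMost)
  qed
  have "Y n = (\<Sum>k<Suc n. (if k = 0 then c n else 0)
      + (if p \<le> k then spq p q (k - p) * c (n - k) else 0)
      + (if q \<le> k then spq p q (k - q) * c (n - k) else 0))"
    unfolding Y_def lessThan_Suc_atMost[symmetric]
  proof (intro sum.cong refl)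
    fix k
    show "spq p q k * c (n - k) = (if k = 0 then c n else 0)
      + (if p \<le> k then spq p q (k - p) * c (n - k) else 0)
      + (if q \<le> k then spq p q (k - q) * c (n - k) else 0)"
      using spq_pos[of k p q] assms(2,3) by (cases "k = 0") (auto simp: spq_0 algebra_simps)
  qed
  also have "\<dots> = c n + (if p \<le> n then Y (n - p) else 0) + (if q \<le> n then Y (n - q) else 0)"
    by (simp only: sum.distrib shifted) (simp add: sum.delta)
  finally show ?thesis .
qed

lemma spq_square:
  assumes "0 < p" and "0 < q"
  shows "(spq p q n)\<^sup>2 = spq p q n + 2 * (\<Sum>k\<le>n. spq p q k *
    (if p \<le> n - k \<and> q \<le> n - k then spq p q (n - k - p) * spq p q (n - k - q) else 0))"
proof (induction n rule: less_induct)
  case (less n)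
  define c where "c j = (if p \<le> j \<and> q \<le> j then spq p q (j - p) * spq p q (j - q) else 0)" for j
  define Y where "Y n = (\<Sum>k\<le>n. spq p q k * c (n - k))" for n
  have IH: "(spq p q j)\<^sup>2 = spq p q j + 2 * Y j" if "j < n" for j
    using less.IH[OF that] unfolding Y_def c_def .
  show ?case
  proof (cases "n = 0")
    case True
    then show ?thesis
      using assms by (simp add: spq_0)
  next
    case False
    define a where "a = (if p \<le> n then spq p q (n - p) else 0)"
    define b where "b = (if q \<le> n then spq p q (n - q) else 0)"
    have s: "spq p q n = a + b"
      using False assms spq_pos[of n p q] unfolding a_def b_def by simp
    have "a\<^sup>2 = a + 2 * (if p \<le> n then Y (n - p) else 0)"
      unfolding a_def using IH[of "n - p"] assms False by auto
    moreover have "b\<^sup>2 = b + 2 * (if q \<le> n then Y (n - q) else 0)"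
      unfolding b_def using IH[of "n - q"] assms False by auto
    moreover have "a * b = c n"
      unfolding a_def b_def c_def by simp
    moreover have "Y n = c n + (if p \<le> n then Y (n - p) else 0) + (if q \<le> n then Y (n - q) else 0)"
      unfolding Y_def using spq_convolution_rec[OF assms] by blast
    ultimately have "(spq p q n)\<^sup>2 = spq p q n + 2 * Y n"
      unfolding s by (simp add: power2_eq_square algebra_simps)
    then show ?thesis
      unfolding Y_def c_def .
  qed
qed

(* A transversal lists, for the rows i = 1..N, the column cs ! (i - 1) matched with row i, so
   toeplitz_perm W N V is the permanent of the 0/1 matrix with rows 1..N, columns V and
   entry 1 at (i, v) iff v - i \<in> W. *)
definition transversals :: "int set \<Rightarrow> nat \<Rightarrow> int set \<Rightarrow> int list set" where
  "transversals W N V =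
     {cs. length cs = N \<and> distinct cs \<and> set cs = V \<and> (\<forall>i<N. cs ! i - int (Suc i) \<in> W)}"

definition toeplitz_perm :: "int set \<Rightarrow> nat \<Rightarrow> int set \<Rightarrow> nat" where
  "toeplitz_perm W N V = card (transversals W N V)"

lemma finite_transversals: "finite (transversals W N V)"
proof (cases "finite V")
  case True
  have "transversals W N V \<subseteq> {cs. set cs \<subseteq> V \<and> length cs = N}"
    unfolding transversals_def by auto
  then show ?thesis
    using finite_lists_length_eq[OF True] by (rule finite_subset)
next
  case False
  then have "transversals W N V = {}"
    unfolding transversals_def by auto
  then show ?thesis
    by simp
qed

lemma toeplitz_perm_0: "toeplitz_perm W 0 V = (if V = {} then 1 else 0)"
proof -
  have "transversals W 0 V = (if V = {} then {[]} else {})"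
    unfolding transversals_def by auto
  then show ?thesis
    unfolding toeplitz_perm_def by simp
qed

lemma toeplitz_perm_eq_0_if_card_ne:
  assumes "card V \<noteq> N"
  shows "toeplitz_perm W N V = 0"
proof -
  have "transversals W N V = {}"
    using assms distinct_card unfolding transversals_def by fastforce
  then show ?thesis
    unfolding toeplitz_perm_def by simp
qed

lemma toeplitz_perm_eq_0_if_unreachable:
  assumes "v \<in> V" and "\<forall>w\<in>W. v \<le> w"
  shows "toeplitz_perm W N V = 0"
proof -
  have "transversals W N V = {}"
  proof (rule ccontr)
    assume "transversals W N V \<noteq> {}"
    then obtain cs where cs: "cs \<in> transversals W N V"
      by blast
    then obtain i where "i < N" and "cs ! i = v"
      using \<open>v \<in> V\<close> unfolding transversals_def by (auto simp: in_set_conv_nth)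
    then have "v - int (Suc i) \<in> W"
      using cs unfolding transversals_def by auto
    then show False
      using assms(2) by fastforce
  qed
  then show ?thesis
    unfolding toeplitz_perm_def by simp
qed

lemma image_minus_one_int: "(\<lambda>v::int. v - 1) ` A = {v. v + 1 \<in> A}"
  by (auto simp: image_iff) (metis add_diff_cancel_right')

lemma Cons_in_transversals_iff:
  "c # cs \<in> transversals W (Suc N) V \<longleftrightarrow>
     c \<in> V \<and> c - 1 \<in> W \<and> map (\<lambda>v. v - 1) cs \<in> transversals W N ((\<lambda>v. v - 1) ` (V - {c}))"
proof -
  have inj: "inj (\<lambda>v::int. v - 1)"
    by (simp add: inj_on_def)
  have "distinct (c # cs) \<and> set (c # cs) = V \<longleftrightarrow> c \<in> V \<and> distinct cs \<and> set cs = V - {c}"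
    by auto
  moreover have "set cs = V - {c} \<longleftrightarrow> set (map (\<lambda>v. v - 1) cs) = (\<lambda>v. v - 1) ` (V - {c})"
    using inj by (simp add: inj_image_eq_iff)
  moreover have "distinct (map (\<lambda>v. v - 1) cs) \<longleftrightarrow> distinct cs"
    using inj by (simp add: distinct_map inj_on_subset)
  moreover have "(\<forall>i<Suc N. (c # cs) ! i - int (Suc i) \<in> W) \<longleftrightarrow>
      c - 1 \<in> W \<and> (\<forall>i<N. cs ! i - 1 - int (Suc i) \<in> W)"
    by (simp add: All_less_Suc2 algebra_simps)
  ultimately show ?thesis
    unfolding transversals_def mem_Collect_eq length_Cons length_map
    by (smt (verit) Suc_inject nth_map)
qed

lemma transversals_Suc:
  "transversals W (Suc N) V = (\<Union>w\<in>{w\<in>W. 1 + w \<in> V}.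
     (\<lambda>cs. (1 + w) # map (\<lambda>v. v + 1) cs) ` transversals W N ((\<lambda>v. v - 1) ` (V - {1 + w})))"
proof (intro equalityI subsetI)
  fix cs assume cs: "cs \<in> transversals W (Suc N) V"
  then obtain c cs' where c: "cs = c # cs'"
    unfolding transversals_def by (cases cs) auto
  then have "c \<in> V" "c - 1 \<in> W" "map (\<lambda>v. v - 1) cs' \<in> transversals W N ((\<lambda>v. v - 1) ` (V - {c}))"
    using cs Cons_in_transversals_iff by auto
  moreover have "cs = (1 + (c - 1)) # map (\<lambda>v. v + 1) (map (\<lambda>v. v - 1) cs')"
    unfolding c by (simp add: map_idI)
  ultimately show "cs \<in> (\<Union>w\<in>{w\<in>W. 1 + w \<in> V}.
      (\<lambda>cs. (1 + w) # map (\<lambda>v. v + 1) cs) ` transversals W N ((\<lambda>v. v - 1) ` (V - {1 + w})))"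
    by force
next
  fix cs assume "cs \<in> (\<Union>w\<in>{w\<in>W. 1 + w \<in> V}.
      (\<lambda>cs. (1 + w) # map (\<lambda>v. v + 1) cs) ` transversals W N ((\<lambda>v. v - 1) ` (V - {1 + w})))"
  then obtain w ts where "w \<in> W" "1 + w \<in> V" "ts \<in> transversals W N ((\<lambda>v. v - 1) ` (V - {1 + w}))"
    and "cs = (1 + w) # map (\<lambda>v. v + 1) ts"
    by blast
  moreover have "map (\<lambda>v. v - 1) (map (\<lambda>v. v + 1) ts) = ts"
    by (simp add: map_idI)
  ultimately show "cs \<in> transversals W (Suc N) V"
    by (simp only: Cons_in_transversals_iff) simp
qed

(* Expansion along the first row: renumbering rows 2..N+1 as 1..N shifts every column by -1. *)
lemma toeplitz_perm_Suc:
  assumes "finite W"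
  shows "toeplitz_perm W (Suc N) V =
    (\<Sum>w\<in>W. if 1 + w \<in> V then toeplitz_perm W N ((\<lambda>v. v - 1) ` (V - {1 + w})) else 0)"
proof -
  define push where "push w cs = (1 + w) # map (\<lambda>v. v + 1) cs" for w and cs :: "int list"
  have inj_push: "inj (push w)" for w
    by (rule injI) (simp add: push_def inj_map_eq_map inj_on_def)
  have "toeplitz_perm W (Suc N) V = (\<Sum>w\<in>{w\<in>W. 1 + w \<in> V}.
      card (push w ` transversals W N ((\<lambda>v. v - 1) ` (V - {1 + w}))))"
    unfolding toeplitz_perm_def transversals_Suc push_def[symmetric]
    by (rule card_UN_disjoint) (use assms finite_transversals in \<open>auto simp: push_def\<close>)
  also have "\<dots> = (\<Sum>w\<in>{w\<in>W. 1 + w \<in> V}. toeplitz_perm W N ((\<lambda>v. v - 1) ` (V - {1 + w})))"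
    unfolding toeplitz_perm_def by (simp add: card_image inj_on_subset[OF inj_push])
  finally show ?thesis
    by (simp add: sum.inter_filter[OF assms])
qed

(* Column 1 + min W can only be reached from row 1. *)
lemma toeplitz_perm_Suc_forced:
  assumes "finite W" and "w\<^sub>0 \<in> W" and "\<forall>w\<in>W. w\<^sub>0 \<le> w" and "1 + w\<^sub>0 \<in> V"
  shows "toeplitz_perm W (Suc N) V = toeplitz_perm W N ((\<lambda>v. v - 1) ` (V - {1 + w\<^sub>0}))"
proof -
  have "toeplitz_perm W N ((\<lambda>v. v - 1) ` (V - {1 + w})) = 0" if "w \<in> W" "w \<noteq> w\<^sub>0" for w
  proof (rule toeplitz_perm_eq_0_if_unreachable)
    show "w\<^sub>0 \<in> (\<lambda>v. v - 1) ` (V - {1 + w})"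
      using assms(4) that(2) by (auto intro: image_eqI[of _ _ "1 + w\<^sub>0"])
  qed (use assms(3) in simp)
  then have "(\<Sum>w\<in>W. if 1 + w \<in> V then toeplitz_perm W N ((\<lambda>v. v - 1) ` (V - {1 + w})) else 0) =
      (\<Sum>w\<in>W. if w = w\<^sub>0 then toeplitz_perm W N ((\<lambda>v. v - 1) ` (V - {1 + w\<^sub>0})) else 0)"
    using assms(4) by (intro sum.cong) auto
  then show ?thesis
    using assms(1,2) by (simp add: toeplitz_perm_Suc)
qed

definition perm_list :: "nat \<Rightarrow> (nat \<Rightarrow> nat) \<Rightarrow> int list" where
  "perm_list N \<pi> = map (\<lambda>i. int (\<pi> (Suc i))) [0..<N]"

lemma perm_list_nth:
  assumes "i \<in> {1..N}"
  shows "perm_list N \<pi> ! (i - 1) = int (\<pi> i)"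
  using assms unfolding perm_list_def by (cases i) auto

lemma set_perm_list: "set (perm_list N \<pi>) = int ` \<pi> ` {1..N}"
proof -
  have "{1..N} = Suc ` {0..<N}"
    by (simp add: atLeastLessThanSuc_atLeastAtMost)
  then show ?thesis
    unfolding perm_list_def by (simp only: set_map set_upt image_image)
qed

lemma perm_list_in_transversals:
  assumes "\<pi> permutes {1..N}" and "\<forall>i\<in>{1..N}. int (\<pi> i) - int i \<in> W"
  shows "perm_list N \<pi> \<in> transversals W N {1..int N}"
proof -
  have "inj_on (\<lambda>i. int (\<pi> (Suc i))) {0..<N}"
    by (rule inj_onI) (metis permutes_inj[OF assms(1)] injD nat.inject of_nat_eq_iff)
  then have "distinct (perm_list N \<pi>)"
    unfolding perm_list_def by (simp add: distinct_map)
  moreover have "\<forall>i<N. perm_list N \<pi> ! i - int (Suc i) \<in> W"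
    using assms(2) unfolding perm_list_def by (simp del: of_nat_Suc)
  ultimately show ?thesis
    using assms(1) set_perm_list[of N \<pi>] unfolding transversals_def
    by (simp add: permutes_image image_int_atLeastAtMost perm_list_def)
qed

lemma transversal_eq_perm_list:
  assumes "cs \<in> transversals W N {1..int N}"
  obtains \<pi> where "\<pi> permutes {1..N}" and "\<forall>i\<in>{1..N}. int (\<pi> i) - int i \<in> W"
    and "perm_list N \<pi> = cs"
proof -
  define \<pi> where "\<pi> i = (if i \<in> {1..N} then nat (cs ! (i - 1)) else i)" for i
  have len: "length cs = N" and fits: "\<forall>k<N. cs ! k - int (Suc k) \<in> W"
    using assms unfolding transversals_def by auto
  have "cs ! k \<ge> 0" if "k < N" for k
    using assms that nth_mem[of k cs] unfolding transversals_def by auto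
  then have cs: "perm_list N \<pi> = cs"
    using len unfolding perm_list_def \<pi>_def by (intro nth_equalityI) auto
  have "int ` \<pi> ` {1..N} = int ` {1..N}"
    using assms set_perm_list[of N \<pi>] unfolding cs transversals_def
    by (simp add: image_int_atLeastAtMost)
  then have "\<pi> ` {1..N} = {1..N}"
    by (simp add: inj_image_eq_iff)
  then have "bij_betw \<pi> {1..N} {1..N}"
    by (simp add: bij_betw_def finite_surj_inj)
  then have "\<pi> permutes {1..N}"
    by (rule bij_imp_permutes) (auto simp: \<pi>_def)
  moreover have "int (\<pi> i) - int i \<in> W" if "i \<in> {1..N}" for i
  proof -
    have "i - 1 < N" and "Suc (i - 1) = i"
      using that by auto
    then show ?thesis
      using fits perm_list_nth[OF that, of \<pi>] unfolding cs by metis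
  qed
  ultimately show ?thesis
    using that cs by blast
qed

lemma Pperm_eq_toeplitz_perm: "Pperm W N = toeplitz_perm W N {1..int N}"
proof -
  define P where "P = {\<pi>. \<pi> permutes {1..N} \<and> (\<forall>i\<in>{1..N}. int (\<pi> i) - int i \<in> W)}"
  have "inj_on (perm_list N) P"
  proof (rule inj_onI)
    fix \<pi> \<sigma> assume "\<pi> \<in> P" "\<sigma> \<in> P" and eq: "perm_list N \<pi> = perm_list N \<sigma>"
    have "\<pi> i = \<sigma> i" for i
    proof (cases "i \<in> {1..N}")
      case True
      then show ?thesis
        using perm_list_nth[OF True, of \<pi>] perm_list_nth[OF True, of \<sigma>] eq by simp
    next
      case False
      have "\<pi> permutes {1..N}" and "\<sigma> permutes {1..N}"
        using \<open>\<pi> \<in> P\<close> \<open>\<sigma> \<in> P\<close> unfolding P_def by auto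
      then show ?thesis
        using False by (simp add: permutes_not_in)
    qed
    then show "\<pi> = \<sigma>" ..
  qed
  moreover have "perm_list N ` P = transversals W N {1..int N}"
  proof (intro equalityI subsetI)
    fix cs assume "cs \<in> perm_list N ` P"
    then show "cs \<in> transversals W N {1..int N}"
      unfolding P_def using perm_list_in_transversals by blast
  next
    fix cs assume "cs \<in> transversals W N {1..int N}"
    then show "cs \<in> perm_list N ` P"
      unfolding P_def by (elim transversal_eq_perm_list) blast
  qed
  ultimately have "card P = toeplitz_perm W N {1..int N}"
    unfolding toeplitz_perm_def by (metis card_image)
  then show ?thesis
    unfolding Pperm_def P_def .
qed

abbreviation band :: "nat \<Rightarrow> int set" where
  "band m \<equiv> {-2, -1, int m}"

lemma toeplitz_perm_band_Suc:
  assumes "-1 \<notin> V"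
  shows "toeplitz_perm (band m) (Suc N) V =
    (if 0 \<in> V then toeplitz_perm (band m) N ((\<lambda>v. v - 1) ` (V - {0})) else 0) +
    (if 1 + int m \<in> V then toeplitz_perm (band m) N ((\<lambda>v. v - 1) ` (V - {1 + int m})) else 0)"
  using assms by (simp add: toeplitz_perm_Suc)

lemma toeplitz_perm_band_forced:
  assumes "-1 \<in> V"
  shows "toeplitz_perm (band m) (Suc N) V = toeplitz_perm (band m) N ((\<lambda>v. v - 1) ` (V - {-1}))"
  using toeplitz_perm_Suc_forced[of "band m" "-2" V N] assms by simp

definition minor_perm :: "nat \<Rightarrow> nat \<Rightarrow> nat \<Rightarrow> nat" where
  "minor_perm m N d = toeplitz_perm (band m) N ({0..int N} - {int d - 1})"

lemma minor_perm_eq_0: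
  assumes "N + 1 < d"
  shows "minor_perm m N d = 0"
proof -
  have "{0..int N} - {int d - 1} = {0..int N}"
    using assms by auto
  then show ?thesis
    unfolding minor_perm_def by (simp add: toeplitz_perm_eq_0_if_card_ne)
qed

(* Rows 1, ..., k are forced onto the columns -1, ..., k - 2, one after the other
   (toeplitz_perm_band_forced), until the hole at column k - 1 is reached. *)
lemma toeplitz_perm_band_holes:
  assumes "k \<le> f"
  shows "toeplitz_perm (band m) N ({-1..int N} - {int k - 1, int f}) =
    (if k \<le> N then minor_perm m (N - k) (f + 1 - k) else 0)"
  using assms
proof (induction k arbitrary: N f)
  case 0
  have "{-1..int N} - {int 0 - 1, int f} = {0..int N} - {int (f + 1 - 0) - 1}"
    by auto
  then show ?case
    by (simp add: minor_perm_def)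
next
  case (Suc k)
  show ?case
  proof (cases N)
    case 0
    have "-1 \<in> {-1..int N} - {int (Suc k) - 1, int f}"
      by simp
    then have "{-1..int N} - {int (Suc k) - 1, int f} \<noteq> {}"
      by blast
    then show ?thesis
      using 0 by (simp add: toeplitz_perm_0)
  next
    case (Suc N')
    have "(\<lambda>v. v - 1) ` ({-1..int N} - {int (Suc k) - 1, int f} - {-1}) =
        {-1..int N'} - {int k - 1, int (f - 1)}"
      using Suc \<open>Suc k \<le> f\<close> by (auto simp: image_minus_one_int)
    then show ?thesis
      using Suc Suc.IH[of "f - 1" N'] \<open>Suc k \<le> f\<close> by (simp add: toeplitz_perm_band_forced)
  qed
qed

lemma minor_perm_0: "minor_perm m 0 d = (if d = 1 then 1 else 0)"
  by (auto simp: minor_perm_def toeplitz_perm_0)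

lemma minor_perm_Suc:
  assumes "1 \<le> d" and "d \<le> m + 1"
  shows "minor_perm m (Suc N) d = (if 2 \<le> d then minor_perm m N (d - 1) else 0)
    + (if d \<le> Suc N then minor_perm m (Suc N - d) (m + 2 - d) else 0)"
proof -
  define V where "V = {0..int (Suc N)} - {int d - 1}"
  have skip: "(if 0 \<in> V then toeplitz_perm (band m) N ((\<lambda>v. v - 1) ` (V - {0})) else 0) =
      (if 2 \<le> d then minor_perm m N (d - 1) else 0)"
  proof -
    have "(\<lambda>v. v - 1) ` (V - {0}) = {0..int N} - {int (d - 1) - 1}" if "2 \<le> d"
      using that unfolding V_def by (auto simp: image_minus_one_int)
    then show ?thesis
      using assms unfolding V_def minor_perm_def by auto
  qed
  have jump: "(if 1 + int m \<in> V then toeplitz_perm (band m) N ((\<lambda>v. v - 1) ` (V - {1 + int m}))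
      else 0) = (if d \<le> Suc N then minor_perm m (Suc N - d) (m + 2 - d) else 0)"
  proof (cases "m \<le> N")
    case True
    then have "1 + int m \<in> V"
      using assms unfolding V_def by auto
    moreover have "(\<lambda>v. v - 1) ` (V - {1 + int m}) = {-1..int N} - {int (d - 1) - 1, int m}"
      using assms True unfolding V_def by (auto simp: image_minus_one_int)
    moreover have "d - 1 \<le> N \<longleftrightarrow> d \<le> Suc N" and "N - (d - 1) = Suc N - d"
      and "m + 1 - (d - 1) = m + 2 - d"
      using assms by auto
    ultimately show ?thesis
      using toeplitz_perm_band_holes[of "d - 1" m m N] assms by simp
  next
    case False
    then have "1 + int m \<notin> V"
      unfolding V_def by auto
    then show ?thesis
      using False by (auto simp: minor_perm_eq_0)
  qed
  have "-1 \<notin> V"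
    unfolding V_def by auto
  then show ?thesis
    using toeplitz_perm_band_Suc[of V m N] skip jump
    unfolding minor_perm_def[of m "Suc N" d] V_def by simp
qed

lemma minor_perm_rec:
  assumes "1 \<le> d" and "d \<le> m + 1"
  shows "minor_perm m N d = (if N = 0 \<and> d = 1 then 1 else 0)
    + (if 2 \<le> d \<and> 1 \<le> N then minor_perm m (N - 1) (d - 1) else 0)
    + (if d \<le> N then minor_perm m (N - d) (m + 2 - d) else 0)"
  using assms by (cases N) (auto simp: minor_perm_0 minor_perm_Suc)

lemma Pperm_band_eq_minor_perm:
  assumes "0 < N"
  shows "Pperm (band m) N = minor_perm m (N - 1) (m + 1)"
proof -
  have "{1..int N} = {0..int N} - {int 1 - 1}"
    by auto
  then have "Pperm (band m) N = minor_perm m N 1"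
    by (simp add: Pperm_eq_toeplitz_perm minor_perm_def)
  also have "\<dots> = minor_perm m (N - 1) (m + 1)"
    using minor_perm_rec[of 1 m N] assms by simp
  finally show ?thesis .
qed

lemma sum_minor_perm_split:
  assumes "1 \<le> d" and "d \<le> m + 1"
  shows "(\<Sum>j<L. minor_perm m j d * f j) = (if d = 1 \<and> 0 < L then f 0 else 0)
    + (if 2 \<le> d then \<Sum>i<L - 1. minor_perm m i (d - 1) * f (Suc i) else 0)
    + (\<Sum>i<L - d. minor_perm m i (m + 2 - d) * f (i + d))"
proof -
  have "(\<Sum>j<L. minor_perm m j d * f j) = (\<Sum>j<L. (if j = 0 then (if d = 1 then f 0 else 0) else 0)
      + (if 1 \<le> j then (if 2 \<le> d then minor_perm m (j - 1) (d - 1) * f (Suc (j - 1)) else 0) else 0)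
      + (if d \<le> j then minor_perm m (j - d) (m + 2 - d) * f (j - d + d) else 0))"
  proof (intro sum.cong refl)
    fix j
    show "minor_perm m j d * f j = (if j = 0 then (if d = 1 then f 0 else 0) else 0)
      + (if 1 \<le> j then (if 2 \<le> d then minor_perm m (j - 1) (d - 1) * f (Suc (j - 1)) else 0) else 0)
      + (if d \<le> j then minor_perm m (j - d) (m + 2 - d) * f (j - d + d) else 0)"
      using minor_perm_rec[OF assms, of j] assms by (auto simp: algebra_simps)
  qed
  also have "\<dots> = (if d = 1 \<and> 0 < L then f 0 else 0)
    + (\<Sum>i<L - 1. if 2 \<le> d then minor_perm m i (d - 1) * f (Suc i) else 0)
    + (\<Sum>i<L - d. minor_perm m i (m + 2 - d) * f (i + d))"
    unfolding sum.distrib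
      sum_lessThan_shift_if_le[where k = 1 and g = "\<lambda>i. if 2 \<le> d then minor_perm m i (d - 1) * f (Suc i) else 0"]
      sum_lessThan_shift_if_le[where k = d and g = "\<lambda>i. minor_perm m i (m + 2 - d) * f (i + d)"]
    by (simp add: sum.delta)
  finally show ?thesis
    by (cases "2 \<le> d") simp_all
qed

lemma spq_product_eq_sum_minor_perm:
  assumes "1 \<le> d" and "d \<le> m + 1" and "d \<le> L"
  shows "spq 1 (m + 2) L * spq 1 (m + 2) (L - d) =
    (\<Sum>j<L. minor_perm m j d * (spq 1 (m + 2) (L - 1 - j))\<^sup>2)"
  using assms
proof (induction L arbitrary: d rule: less_induct)
  case (less L)
  let ?s = "spq 1 (m + 2)"
  have "0 < L"
    using less.prems by simp
  have head: "?s (L - 1) * ?s (L - d) = (if d = 1 then (?s (L - 1))\<^sup>2 else 0)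
      + (if 2 \<le> d then \<Sum>i<L - 1. minor_perm m i (d - 1) * (?s (L - 1 - Suc i))\<^sup>2 else 0)"
  proof (cases "d = 1")
    case True
    then show ?thesis
      by (simp add: power2_eq_square)
  next
    case False
    then have "?s (L - 1) * ?s (L - 1 - (d - 1)) =
        (\<Sum>i<L - 1. minor_perm m i (d - 1) * (?s (L - 1 - 1 - i))\<^sup>2)"
      using less.IH[of "L - 1" "d - 1"] less.prems \<open>0 < L\<close> by simp
    then show ?thesis
      using False less.prems by (simp add: diff_diff_add)
  qed
  have tail: "(if m + 2 \<le> L then ?s (L - (m + 2)) * ?s (L - d) else 0) =
      (\<Sum>i<L - d. minor_perm m i (m + 2 - d) * (?s (L - 1 - (i + d)))\<^sup>2)"
  proof (cases "m + 2 \<le> L")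
    case True
    then have "?s (L - d) * ?s (L - d - (m + 2 - d)) =
        (\<Sum>i<L - d. minor_perm m i (m + 2 - d) * (?s (L - d - 1 - i))\<^sup>2)"
      using less.IH[of "L - d" "m + 2 - d"] less.prems by simp
    moreover have "L - d - (m + 2 - d) = L - (m + 2)" and "\<And>i. L - d - 1 - i = L - 1 - (i + d)"
      using less.prems by auto
    ultimately show ?thesis
      using True by (simp add: mult.commute)
  next
    case False
    then have "minor_perm m i (m + 2 - d) = 0" if "i < L - d" for i
      using that less.prems by (intro minor_perm_eq_0) linarith
    then show ?thesis
      using False by simp
  qed
  have "?s L = ?s (L - 1) + (if m + 2 \<le> L then ?s (L - (m + 2)) else 0)"
    using spq_pos[of L 1 "m + 2"] \<open>0 < L\<close> by simp
  then have "?s L * ?s (L - d) = ?s (L - 1) * ?s (L - d)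
      + (if m + 2 \<le> L then ?s (L - (m + 2)) * ?s (L - d) else 0)"
    by (simp add: algebra_simps)
  also have "\<dots> = (\<Sum>j<L. minor_perm m j d * (?s (L - 1 - j))\<^sup>2)"
    unfolding head tail sum_minor_perm_split[OF less.prems(1,2)]
    using \<open>0 < L\<close> by (simp add: diff_diff_add)
  finally show ?case .
qed

lemma spq_cross_eq_sum_Pperm:
  "(if 1 \<le> j \<and> m + 2 \<le> j then spq 1 (m + 2) (j - 1) * spq 1 (m + 2) (j - (m + 2)) else 0) =
    (\<Sum>r=m+2..j. Pperm (band m) (r - 1) * (spq 1 (m + 2) (j - r))\<^sup>2)"
proof (cases "m + 2 \<le> j")
  case True
  let ?s = "spq 1 (m + 2)"
  have "?s (j - 1) * ?s (j - 1 - (m + 1)) =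
      (\<Sum>i<j - 1. minor_perm m i (m + 1) * (?s (j - 1 - 1 - i))\<^sup>2)"
    using True by (intro spq_product_eq_sum_minor_perm) auto
  also have "\<dots> = (\<Sum>i<j - 1. minor_perm m i (m + 1) * (?s (j - 2 - i))\<^sup>2)"
    by (simp add: diff_diff_add)
  also have "\<dots> = (\<Sum>i=m..j-2. minor_perm m i (m + 1) * (?s (j - 2 - i))\<^sup>2)"
    using True by (intro sum.mono_neutral_right) (auto simp: minor_perm_eq_0)
  also have "\<dots> = (\<Sum>i=m..j-2. minor_perm m (i + 2 - 2) (m + 1) * (?s (j - (i + 2)))\<^sup>2)"
    by (intro sum.cong refl) (simp add: diff_diff_add add.commute)
  also have "\<dots> = (\<Sum>r=m+2..j-2+2. minor_perm m (r - 2) (m + 1) * (?s (j - r))\<^sup>2)"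
    by (rule sum.shift_bounds_cl_nat_ivl[symmetric])
  also have "\<dots> = (\<Sum>r=m+2..j. minor_perm m (r - 2) (m + 1) * (?s (j - r))\<^sup>2)"
    using True by (simp only: le_add_diff_inverse2[of 2 j] add_leD2)
  also have "\<dots> = (\<Sum>r=m+2..j. Pperm (band m) (r - 1) * (?s (j - r))\<^sup>2)"
    by (intro sum.cong refl) (simp add: Pperm_band_eq_minor_perm numeral_2_eq_2)
  finally show ?thesis
    using True by (simp add: diff_diff_add)
qed simp

theorem mainTheorem9:
  fixes m n :: nat
  shows "(spq 1 (m+2) n)^2 = spq 1 (m+2) n
     + 2 * (\<Sum>k<n-m-1. \<Sum>r=m+2..n-k.
              Pperm {-2, -1, int m} (r - 1) * spq 1 (m+2) k * (spq 1 (m+2) (n-k-r))^2)"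
proof -
  let ?s = "spq 1 (m + 2)"
  have "(\<Sum>k<n-m-1. \<Sum>r=m+2..n-k. Pperm (band m) (r - 1) * ?s k * (?s (n - k - r))\<^sup>2) =
      (\<Sum>k\<le>n. ?s k * (\<Sum>r=m+2..n-k. Pperm (band m) (r - 1) * (?s (n - k - r))\<^sup>2))"
    unfolding sum_distrib_left
    by (rule sum.mono_neutral_cong_left) (auto simp: algebra_simps)
  also have "\<dots> = (\<Sum>k\<le>n. ?s k * (if 1 \<le> n - k \<and> m + 2 \<le> n - k
      then ?s (n - k - 1) * ?s (n - k - (m + 2)) else 0))"
    by (simp only: spq_cross_eq_sum_Pperm)
  finally show ?thesis
    using spq_square[of 1 "m + 2" n] by simp
qed

end
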